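(* Let $0<\gamma<\infty$ and $T>0$. Let $(u_1,\omega_1,\psi_1)$ be a classical solution of the system $$\partial_t u_1 + u^r\partial_r u_1 + u^z\partial_z u_1 = 2u_1\partial_z\psi_1,\qquad \partial_t \omega_1 + u^r\partial_r \omega_1 + u^z\partial_z \omega_1 = \partial_z(u_1^2),$$ $$-\Big(\partial_r^2+\frac{3}{r}\partial_r+\partial_z^2\Big)\psi_1=\omega_1,\qquad u^r=-r\partial_z\psi_1,\quad u^z=2\psi_1+r\partial_r\psi_1,$$ in a space-time region $\mathcal{W}$, where $\mathcal{W}$ is either (i) $\mathcal{C}_{\delta,T}=\{(r,z,t): 1-\delta<r<1,\ -\delta<z<\delta,\ T-\delta<t<T\}$ for some $0<\delta\ll 1$, or (ii) $\mathcal{W}_{\delta(t)}=\{(r,z,t): 1-\delta(t)<r<1,\ -\delta(t)<z<\delta(t),\ T_0<t<T\}$ for some $T_0<T$ and some decreasing function $\delta:(T_0,T)\to(0,\infty)$ with $\lim_{t\to T^-}\delta(t)=0$ and $\limsup_{t\to T^-}(T-t)^{-\gamma}\delta(t)=\infty$. Suppose that on $\mathcal{W}$ the solution has the self-similar form $$u_1(r,z,t)=(T-t)^{-1+\frac{\gamma}{2}}U(R,Z),\quad \omega_1(r,z,t)=(T-t)^{-1}\Omega(R,Z),\quad \psi_1(r,z,t)=(T-t)^{-1+2\gamma}\Psi(R,Z),$$ with $R=(r-1)(T-t)^{-\gamma}$, $Z=z(T-t)^{-\gamma}$, where the profiles $U,\Omega,\Psi$ are sufficiently smooth (classical) functions independent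 of $t$ defined on the closed left half-plane $\mathcal{D}=\{(R,Z)\in\mathbb{R}^2: R\le 0\}$. Assume the decay condition: for every fixed $R\le 0$, $$|U(R,Z)|+|\Omega(R,Z)|\to 0\quad\text{as } |Z|\to\infty.$$ Then $u_1\equiv 0$ and $\omega_1\equiv 0$ on $\mathcal{W}$, and there are constants $a,b$ such that $\psi_1(r,z,t)=a(T-t)^{-1+\gamma}z+b(T-t)^{-1+2\gamma}$ there (equivalently $\Psi(R,Z)=aZ+b$ on $\mathcal{D}$).
   Context: This concerns axisymmetric solutions of the 3D incompressible Euler equations in the cylinder $\{0<r<1\}$ in cylindrical coordinates $(r,\theta,z)$, with velocity $u=u^re_r+u^\theta e_\theta+u^ze_z$ independent of $\theta$. Here $u_1=u^\theta/r$, $\omega_1=\omega^\theta/r$, $\psi_1=\psi^\theta/r$, where $\omega^\theta$ is the angular component of the vorticity $\mathrm{curl}\,u$ and $\psi^\theta$ is the angular component of the vector stream function $\psi$ (with $\mathrm{curl}\,\psi=u$, $\mathrm{div}\,\psi=0$). No boundary condition at $r=1$ is assumed. $T$ is a (possible) blow-up time. *)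

theory Defs
  imports "HOL-Analysis.Analysis"
begin

definition Dr :: "(real \<Rightarrow> real \<Rightarrow> real \<Rightarrow> real) \<Rightarrow> real \<Rightarrow> real \<Rightarrow> real \<Rightarrow> real" where
  "Dr f r z t = deriv (\<lambda>s. f s z t) r"

definition Dz :: "(real \<Rightarrow> real \<Rightarrow> real \<Rightarrow> real) \<Rightarrow> real \<Rightarrow> real \<Rightarrow> real \<Rightarrow> real" where
  "Dz f r z t = deriv (\<lambda>s. f r s t) z"

definition Dt :: "(real \<Rightarrow> real \<Rightarrow> real \<Rightarrow> real) \<Rightarrow> real \<Rightarrow> real \<Rightarrow> real \<Rightarrow> real" where
  "Dt f r z t = deriv (\<lambda>s. f r z s) t"

text \<open>Iterated partial derivatives of a profile g(R,Z): True = d/dR, False = d/dZ.\<close>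

fun pder :: "bool list \<Rightarrow> (real \<Rightarrow> real \<Rightarrow> real) \<Rightarrow> real \<Rightarrow> real \<Rightarrow> real" where
  "pder [] g = g"
| "pder (b # bs) g =
     (if b then (\<lambda>R Z. deriv (\<lambda>x. pder bs g x Z) R)
      else (\<lambda>R Z. deriv (\<lambda>y. pder bs g R y) Z))"

definition smooth2_on :: "(real \<times> real) set \<Rightarrow> (real \<Rightarrow> real \<Rightarrow> real) \<Rightarrow> bool" where
  "smooth2_on S g \<longleftrightarrow>
     (\<forall>bs. continuous_on S (\<lambda>(R, Z). pder bs g R Z) \<and>
        (\<forall>(R, Z) \<in> S. (\<lambda>x. pder bs g x Z) differentiable (at R) \<and>
                       (\<lambda>y. pder bs g R y) differentiable (at Z)))"

definition cyl_region :: "real \<Rightarrow> real \<Rightarrow> (real \<times> real \<times> real) set" where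
  "cyl_region \<delta> T = {(r, z, t). 1 - \<delta> < r \<and> r < 1 \<and> - \<delta> < z \<and> z < \<delta> \<and> T - \<delta> < t \<and> t < T}"

text \<open>Case (ii): W_{delta(t)}, intersected with the cylinder 0 < r.\<close>
definition moving_region :: "real \<Rightarrow> (real \<Rightarrow> real) \<Rightarrow> real \<Rightarrow> (real \<times> real \<times> real) set" where
  "moving_region T0 \<delta> T = {(r, z, t). 0 < r \<and> 1 - \<delta> t < r \<and> r < 1 \<and> - \<delta> t < z \<and> z < \<delta> t \<and> T0 < t \<and> t < T}"

definition half_plane :: "(real \<times> real) set" where
  "half_plane = {(R, Z). R \<le> 0}"

end

theory Submission
  imports Defs
begin

text \<open>
  Along the curve \<open>\<tau> \<mapsto> (1 + R \<tau>\<^sup>\<gamma>, Z \<tau>\<^sup>\<gamma>, T - \<tau>)\<close> the self-similar variables stay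
  at \<open>(R, Z)\<close>, so the ansatz turns the elliptic equation and the vorticity equation into
  identities between profile values at \<open>(R, Z)\<close> whose coefficients are affine in \<open>\<tau>\<^sup>\<gamma>\<close>.
  Both kinds of regions contain such a curve for a whole interval of times (for the shrinking
  region this is where the condition on the Limsup enters), so both coefficients vanish. This gives
  \<open>\<partial>\<^sub>R\<Psi> = 0\<close> and \<open>\<Omega> = - \<partial>\<^sub>Z\<^sup>2\<Psi>\<close> from the elliptic equation, and
  \<open>\<Psi> \<partial>\<^sub>Z\<Omega> = 0\<close> and \<open>\<partial>\<^sub>Z(U\<^sup>2) = \<Omega> + \<gamma> Z \<partial>\<^sub>Z\<Omega>\<close> from the vorticity equation.
  Near a point where \<open>\<partial>\<^sub>Z\<Omega> \<noteq> 0\<close> the profile \<open>\<Psi>\<close> would vanish, hence so would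
  \<open>\<Omega> = - \<partial>\<^sub>Z\<^sup>2\<Psi>\<close> and \<open>\<partial>\<^sub>Z\<Omega>\<close>; so \<open>\<Omega>\<close> is constant in \<open>Z\<close> and, by the decay
  condition, zero. Then \<open>\<Psi>\<close> is affine in \<open>Z\<close>, and \<open>U\<^sup>2\<close> is constant in \<open>Z\<close>, hence zero.
\<close>

section \<open>Self-similar fields and their partial derivatives\<close>

definition selfsim :: "real \<Rightarrow> real \<Rightarrow> real \<Rightarrow> (real \<Rightarrow> real \<Rightarrow> real) \<Rightarrow> real \<Rightarrow> real \<Rightarrow> real \<Rightarrow> real"
  where "selfsim \<gamma> T \<alpha> P r z t =
    (T - t) powr \<alpha> * P ((r - 1) * (T - t) powr (- \<gamma>)) (z * (T - t) powr (- \<gamma>))"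

lemma selfsim_at_scaled_point:
  assumes "0 < \<tau>"
  shows "selfsim \<gamma> T \<alpha> P (1 + R * \<tau> powr \<gamma>) (Z * \<tau> powr \<gamma>) (T - \<tau>) = \<tau> powr \<alpha> * P R Z"
  using assms by (simp add: selfsim_def powr_minus mult.assoc)

lemma deriv_scaled_comp:
  fixes G :: "real \<Rightarrow> real"
  assumes "G differentiable (at ((x - k) * E))"
  shows "deriv (\<lambda>s. C * G ((s - k) * E)) x = C * E * deriv G ((x - k) * E)"
proof -
  have "(G has_real_derivative deriv G ((x - k) * E)) (at ((x - k) * E))"
    using assms by (simp add: DERIV_deriv_iff_real_differentiable)
  then have "((\<lambda>s. C * G ((s - k) * E)) has_real_derivative C * (deriv G ((x - k) * E) * E)) (at x)"
    by (intro DERIV_cmult DERIV_chain2[of G]) (auto intro!: derivative_eq_intros)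
  then show ?thesis by (simp add: DERIV_imp_deriv)
qed

lemma Dr_selfsim:
  assumes P: "(\<lambda>x. P x (z * (T - t) powr (- \<gamma>))) differentiable (at ((r - 1) * (T - t) powr (- \<gamma>)))"
    and f: "\<forall>\<^sub>F s in nhds r. f s z t = selfsim \<gamma> T \<alpha> P s z t"
  shows "Dr f r z t = selfsim \<gamma> T (\<alpha> - \<gamma>) (pder [True] P) r z t"
proof -
  have "Dr f r z t = deriv (\<lambda>s. (T - t) powr \<alpha> *
      P ((s - 1) * (T - t) powr (- \<gamma>)) (z * (T - t) powr (- \<gamma>))) r"
    unfolding Dr_def by (rule deriv_cong_ev[OF f[unfolded selfsim_def] refl])
  also have "\<dots> = (T - t) powr \<alpha> * (T - t) powr (- \<gamma>) *
      pder [True] P ((r - 1) * (T - t) powr (- \<gamma>)) (z * (T - t) powr (- \<gamma>))"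
    using deriv_scaled_comp[OF P] by simp
  also have "(T - t) powr \<alpha> * (T - t) powr (- \<gamma>) = (T - t) powr (\<alpha> - \<gamma>)"
    by (simp add: powr_add[symmetric])
  finally show ?thesis by (simp add: selfsim_def)
qed

lemma Dz_selfsim:
  assumes P: "(\<lambda>y. P ((r - 1) * (T - t) powr (- \<gamma>)) y) differentiable (at (z * (T - t) powr (- \<gamma>)))"
    and f: "\<forall>\<^sub>F y in nhds z. f r y t = selfsim \<gamma> T \<alpha> P r y t"
  shows "Dz f r z t = selfsim \<gamma> T (\<alpha> - \<gamma>) (pder [False] P) r z t"
proof -
  have "Dz f r z t = deriv (\<lambda>y. (T - t) powr \<alpha> *
      P ((r - 1) * (T - t) powr (- \<gamma>)) (y * (T - t) powr (- \<gamma>))) z"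
    unfolding Dz_def by (rule deriv_cong_ev[OF f[unfolded selfsim_def] refl])
  also have "\<dots> = (T - t) powr \<alpha> * (T - t) powr (- \<gamma>) *
      pder [False] P ((r - 1) * (T - t) powr (- \<gamma>)) (z * (T - t) powr (- \<gamma>))"
    using deriv_scaled_comp[where k = 0] P by simp
  also have "(T - t) powr \<alpha> * (T - t) powr (- \<gamma>) = (T - t) powr (\<alpha> - \<gamma>)"
    by (simp add: powr_add[symmetric])
  finally show ?thesis by (simp add: selfsim_def)
qed

lemma Dt_selfsim_R_independent:
  fixes h :: "real \<Rightarrow> real"
  assumes h: "h differentiable (at (z * (T - t) powr (- \<gamma>)))" and "t < T"
    and f: "\<forall>\<^sub>F s in nhds t. f r z s = selfsim \<gamma> T \<alpha> (\<lambda>_. h) r z s"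
  shows "Dt f r z t = selfsim \<gamma> T (\<alpha> - 1) (\<lambda>_ Z. \<gamma> * Z * deriv h Z - \<alpha> * h Z) r z t"
proof -
  define Z where "Z = z * (T - t) powr (- \<gamma>)"
  have "((\<lambda>s. z * (T - s) powr (- \<gamma>)) has_real_derivative z * (- \<gamma> * (T - t) powr (- \<gamma> - 1) * -1)) (at t)"
    using \<open>t < T\<close> by (auto intro!: derivative_eq_intros)
  with h have hD: "((\<lambda>s. h (z * (T - s) powr (- \<gamma>))) has_real_derivative
      deriv h Z * (z * (- \<gamma> * (T - t) powr (- \<gamma> - 1) * -1))) (at t)"
    by (intro DERIV_chain2[of h]) (simp_all add: Z_def DERIV_deriv_iff_real_differentiable)
  have pD: "((\<lambda>s. (T - s) powr \<alpha>) has_real_derivative \<alpha> * (T - t) powr (\<alpha> - 1) * -1) (at t)"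
    using \<open>t < T\<close> by (auto intro!: derivative_eq_intros)
  from DERIV_mult[OF pD hD] have "((\<lambda>s. selfsim \<gamma> T \<alpha> (\<lambda>_. h) r z s) has_real_derivative
      \<gamma> * z * deriv h Z * ((T - t) powr \<alpha> * (T - t) powr (- \<gamma> - 1))
      - \<alpha> * (T - t) powr (\<alpha> - 1) * h Z) (at t)"
    by (simp add: selfsim_def Z_def algebra_simps)
  moreover have "(T - t) powr \<alpha> * (T - t) powr (- \<gamma> - 1) = (T - t) powr (\<alpha> - 1) * (T - t) powr (- \<gamma>)"
    by (simp add: powr_add[symmetric] algebra_simps)
  ultimately have "((\<lambda>s. selfsim \<gamma> T \<alpha> (\<lambda>_. h) r z s) has_real_derivative
      selfsim \<gamma> T (\<alpha> - 1) (\<lambda>_ Z. \<gamma> * Z * deriv h Z - \<alpha> * h Z) r z t) (at t)"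
    by (simp add: selfsim_def Z_def algebra_simps)
  then show ?thesis
    unfolding Dt_def by (simp add: deriv_cong_ev[OF f refl] DERIV_imp_deriv)
qed

lemma eventually_nhds_continuous_in_open:
  assumes "open S" "isCont g x" "g x \<in> S"
  shows "\<forall>\<^sub>F y in nhds x. g y \<in> S"
proof -
  have "(g \<longlongrightarrow> g x) (nhds x)"
    using assms(2) by (simp add: isCont_def tendsto_at_iff_tendsto_nhds)
  then show ?thesis using assms(1,3) by (rule topological_tendstoD)
qed

lemma eventually_nhds_deriv_eq_0:
  fixes f :: "real \<Rightarrow> real"
  assumes "\<forall>\<^sub>F y in nhds x. f y = 0"
  shows "\<forall>\<^sub>F y in nhds x. deriv f y = 0"
proof -
  have "\<forall>\<^sub>F y in nhds x. \<forall>\<^sub>F w in nhds y. f w = 0"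
    using assms by (simp add: eventually_eventually)
  then show ?thesis
    by eventually_elim (simp add: deriv_cong_ev[of f "\<lambda>_. 0"])
qed

lemma deriv_eq_0_imp_eq:
  fixes f :: "real \<Rightarrow> real"
  assumes "convex S" "x \<in> S" "y \<in> S"
    and "\<And>s. s \<in> S \<Longrightarrow> f differentiable (at s)" "\<And>s. s \<in> S \<Longrightarrow> deriv f s = 0"
  shows "f x = f y"
proof -
  have "\<exists>c. \<forall>s\<in>S. f s = c"
  proof (rule has_field_derivative_zero_constant[OF assms(1)])
    fix s assume "s \<in> S"
    then have "(f has_real_derivative 0) (at s)"
      using assms(4,5) by (metis DERIV_deriv_iff_real_differentiable)
    then show "(f has_real_derivative 0) (at s within S)"
      by (rule has_field_derivative_at_within)
  qed
  then show ?thesis using assms(2,3) by auto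
qed

lemma constant_tendsto_0_at_infinity:
  fixes f :: "real \<Rightarrow> real"
  assumes "\<And>x y. f x = f y" "(f \<longlongrightarrow> 0) at_infinity"
  shows "f x = 0"
proof -
  have "f = (\<lambda>_. f x)" using assms(1) by auto
  with assms(2) show ?thesis
    using tendsto_const_iff[OF trivial_limit_at_infinity] by metis
qed

lemma affine_if_deriv2_eq_0:
  fixes g :: "real \<Rightarrow> real"
  assumes "\<And>x. g differentiable (at x)" "\<And>x. deriv g differentiable (at x)"
    and "\<And>x. deriv (deriv g) x = 0"
  obtains a b where "\<And>x. g x = a * x + b"
proof -
  define a where "a = deriv g 0"
  have g': "(g has_real_derivative a) (at x)" for x
  proof -
    have "deriv g x = a"
      unfolding a_def using assms(2,3)
      by (intro deriv_eq_0_imp_eq[where f = "deriv g" and S = UNIV]) auto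
    moreover have "(g has_real_derivative deriv g x) (at x)"
      using assms(1) by (simp add: DERIV_deriv_iff_real_differentiable)
    ultimately show ?thesis by simp
  qed
  define k where "k x = g x - a * x" for x
  have "\<forall>x. (k has_real_derivative 0) (at x)"
    using g' unfolding k_def by (auto intro!: derivative_eq_intros)
  then have "k x = k 0" for x using DERIV_isconst_all[of k] by blast
  then have "g x = a * x + g 0" for x
    unfolding k_def by (metis add.commute diff_add_cancel mult_zero_right diff_zero)
  then show ?thesis by (rule that)
qed

text \<open>If \<open>g h' = 0\<close> and \<open>h = - g''\<close>, then near a point where \<open>h' \<noteq> 0\<close> we would have
  \<open>g = 0\<close>, hence \<open>h = 0\<close>, hence \<open>h' = 0\<close>.\<close>

lemma deriv_eq_0_if_mult_deriv_eq_0: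
  fixes g h :: "real \<Rightarrow> real"
  assumes "\<And>x. g x * deriv h x = 0" "\<And>x. h x = - deriv (deriv g) x" "isCont (deriv h) x"
  shows "deriv h x = 0"
proof (rule ccontr)
  assume "deriv h x \<noteq> 0"
  then have "\<forall>\<^sub>F y in nhds x. deriv h y \<in> - {0}"
    using assms(3) by (intro eventually_nhds_continuous_in_open) auto
  then have "\<forall>\<^sub>F y in nhds x. g y = 0"
    by eventually_elim (use assms(1) in auto)
  then have "\<forall>\<^sub>F y in nhds x. deriv (deriv g) y = 0"
    by (intro eventually_nhds_deriv_eq_0)
  then have "\<forall>\<^sub>F y in nhds x. h y = 0"
    by eventually_elim (simp add: assms(2))
  then have "\<forall>\<^sub>F y in nhds x. deriv h y = 0"
    by (rule eventually_nhds_deriv_eq_0)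
  then have "deriv h x = 0" by (rule eventually_nhds_x_imp_x)
  with \<open>deriv h x \<noteq> 0\<close> show False ..
qed

lemma affine_eq_0_at_two_points:
  fixes a b x y :: real
  assumes "x \<noteq> y" "a + x * b = 0" "a + y * b = 0"
  shows "b = 0" "a = 0"
proof -
  have "(x - y) * b = (a + x * b) - (a + y * b)" by (simp add: algebra_simps)
  with assms(2,3) have "(x - y) * b = 0" by simp
  with assms(1) show "b = 0" by simp
  with assms(2) show "a = 0" by simp
qed

section \<open>The blow-up region in self-similar variables\<close>

definition blowup_region :: "real \<Rightarrow> real \<Rightarrow> (real \<times> real \<times> real) set \<Rightarrow> bool" where
  "blowup_region \<gamma> T W \<longleftrightarrow>
     (\<exists>\<delta>. 0 < \<delta> \<and> \<delta> < 1 \<and> W = cyl_region \<delta> T) \<or>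
     (\<exists>T0 \<delta>. T0 < T \<and> (\<forall>t. T0 < t \<and> t < T \<longrightarrow> 0 < \<delta> t) \<and>
        (\<forall>s t. T0 < s \<and> s \<le> t \<and> t < T \<longrightarrow> \<delta> t \<le> \<delta> s) \<and>
        (\<delta> \<longlongrightarrow> 0) (at_left T) \<and>
        Limsup (at_left T) (\<lambda>t. ereal ((T - t) powr (- \<gamma>) * \<delta> t)) = \<infinity> \<and>
        W = moving_region T0 \<delta> T)"

lemma blowup_region_bounds:
  assumes "blowup_region \<gamma> T W" "(r, z, t) \<in> W"
  shows "0 < r" "r < 1" "t < T"
  using assms by (auto simp: blowup_region_def cyl_region_def moving_region_def)

lemma powr_le_if_le_root:
  fixes \<gamma> \<tau> c :: real
  assumes "0 < \<gamma>" "0 \<le> \<tau>" "0 \<le> c" "\<tau> \<le> c powr (1 / \<gamma>)"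
  shows "\<tau> powr \<gamma> \<le> c"
proof -
  have "\<tau> powr \<gamma> \<le> (c powr (1 / \<gamma>)) powr \<gamma>"
    using assms by (intro powr_mono2) auto
  also have "\<dots> = c" using assms by (simp add: powr_powr)
  finally show ?thesis .
qed

lemma open_box: "open ({a<..<b} \<times> {c<..<d} \<times> {e<..<f} :: (real \<times> real \<times> real) set)"
  by (intro open_Times open_greaterThanLessThan)

text \<open>The condition \<open>M \<tau>\<^sub>2\<^sup>\<gamma> \<le> D\<close> makes the boxes below large in the
  self-similar variables.\<close>

lemma cyl_region_boxes:
  assumes "0 < \<gamma>" "0 < \<delta>" "0 < M"
  obtains D \<tau>1 \<tau>2 where "0 < \<tau>1" "\<tau>1 < \<tau>2" "M * \<tau>2 powr \<gamma> \<le> D"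
    "{1 - D<..<1} \<times> {- D<..<D} \<times> {T - \<tau>2<..<T - \<tau>1} \<subseteq> interior (cyl_region \<delta> T)"
proof
  define \<tau>2 where "\<tau>2 = min \<delta> ((\<delta> / M) powr (1 / \<gamma>))"
  have "0 < \<tau>2" using assms by (simp add: \<tau>2_def)
  then show "0 < \<tau>2 / 2" "\<tau>2 / 2 < \<tau>2" by auto
  have "\<tau>2 powr \<gamma> \<le> \<delta> / M"
    using assms by (intro powr_le_if_le_root) (auto simp: \<tau>2_def)
  then show "M * \<tau>2 powr \<gamma> \<le> \<delta>" using assms by (simp add: field_simps)
  have "{1 - \<delta><..<1} \<times> {- \<delta><..<\<delta>} \<times> {T - \<tau>2<..<T - \<tau>2 / 2} \<subseteq> cyl_region \<delta> T"
    using assms by (auto simp: cyl_region_def \<tau>2_def)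
  then show "{1 - \<delta><..<1} \<times> {- \<delta><..<\<delta>} \<times> {T - \<tau>2<..<T - \<tau>2 / 2} \<subseteq> interior (cyl_region \<delta> T)"
    by (intro interior_maximal open_box)
qed

lemma frequently_gt_if_Limsup_infinity:
  assumes "Limsup F (\<lambda>x. ereal (f x)) = \<infinity>"
  shows "\<exists>\<^sub>F x in F. M < f x"
proof (rule ccontr)
  assume "\<not> (\<exists>\<^sub>F x in F. M < f x)"
  then have "\<forall>\<^sub>F x in F. ereal (f x) \<le> ereal M"
    by (simp add: not_frequently not_less)
  then have "Limsup F (\<lambda>x. ereal (f x)) \<le> ereal M"
    by (rule Limsup_bounded)
  with assms show False by simp
qed

lemma moving_region_boxes:
  fixes \<delta> :: "real \<Rightarrow> real"
  assumes "0 < \<gamma>" "0 < M" "T0 < T"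
    and pos: "\<forall>t. T0 < t \<and> t < T \<longrightarrow> 0 < \<delta> t"
    and decr: "\<forall>s t. T0 < s \<and> s \<le> t \<and> t < T \<longrightarrow> \<delta> t \<le> \<delta> s"
    and lim: "(\<delta> \<longlongrightarrow> 0) (at_left T)"
    and sup: "Limsup (at_left T) (\<lambda>t. ereal ((T - t) powr (- \<gamma>) * \<delta> t)) = \<infinity>"
  obtains D \<tau>1 \<tau>2 where "0 < \<tau>1" "\<tau>1 < \<tau>2" "M * \<tau>2 powr \<gamma> \<le> D"
    "{1 - D<..<1} \<times> {- D<..<D} \<times> {T - \<tau>2<..<T - \<tau>1} \<subseteq> interior (moving_region T0 \<delta> T)"
proof -
  have "\<forall>\<^sub>F t in at_left T. T0 < t \<and> t < T"
    using \<open>T0 < T\<close> by (auto simp: eventually_at_left intro!: exI[of _ T0])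
  with order_tendstoD(2)[OF lim, of 1]
  have "\<forall>\<^sub>F t in at_left T. \<delta> t < 1 \<and> T0 < t \<and> t < T"
    by (auto intro: eventually_conj)
  with frequently_gt_if_Limsup_infinity[OF sup, of M]
  have "\<exists>\<^sub>F t in at_left T. M < (T - t) powr (- \<gamma>) * \<delta> t \<and> \<delta> t < 1 \<and> T0 < t \<and> t < T"
    by (rule frequently_eventually_frequently)
  then obtain t where t: "M < (T - t) powr (- \<gamma>) * \<delta> t" "\<delta> t < 1" "T0 < t" "t < T"
    by (auto dest: frequently_ex)
  define D \<tau>1 \<tau>2 where "D = \<delta> t" and "\<tau>1 = T - t"
    and "\<tau>2 = min (T - T0) ((D / M) powr (1 / \<gamma>))"
  have D: "0 < D" "D < 1" and \<tau>1: "0 < \<tau>1" using pos t by (auto simp: D_def \<tau>1_def)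
  have "M * \<tau>1 powr \<gamma> < (\<tau>1 powr (- \<gamma>) * D) * \<tau>1 powr \<gamma>"
    using t(1) \<tau>1 by (simp add: D_def \<tau>1_def)
  also have "\<dots> = D" using \<tau>1 by (simp add: powr_minus)
  finally have "\<tau>1 powr \<gamma> < D / M" using \<open>0 < M\<close> by (simp add: field_simps)
  then have "(\<tau>1 powr \<gamma>) powr (1 / \<gamma>) < (D / M) powr (1 / \<gamma>)"
    using \<open>0 < \<gamma>\<close> by (intro powr_less_mono2) auto
  then have "\<tau>1 < \<tau>2" using \<open>0 < \<gamma>\<close> \<tau>1 t(3) by (simp add: powr_powr \<tau>1_def \<tau>2_def)
  moreover have "M * \<tau>2 powr \<gamma> \<le> D"
  proof -
    have "\<tau>2 powr \<gamma> \<le> D / M"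
      using assms D \<open>\<tau>1 < \<tau>2\<close> \<tau>1 by (intro powr_le_if_le_root) (auto simp: \<tau>2_def)
    then show ?thesis using \<open>0 < M\<close> by (simp add: field_simps)
  qed
  moreover have "{1 - D<..<1} \<times> {- D<..<D} \<times> {T - \<tau>2<..<T - \<tau>1} \<subseteq> moving_region T0 \<delta> T"
  proof clarify
    fix r z s assume "r \<in> {1 - D<..<1}" "z \<in> {- D<..<D}" "s \<in> {T - \<tau>2<..<T - \<tau>1}"
    moreover from this have "T0 < s" by (auto simp: \<tau>2_def)
    moreover from calculation have "D \<le> \<delta> s"
      using decr t(4) by (auto simp: D_def \<tau>1_def)
    ultimately show "(r, z, s) \<in> moving_region T0 \<delta> T"
      using D t(4) by (auto simp: moving_region_def \<tau>1_def)
  qed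
  then have "{1 - D<..<1} \<times> {- D<..<D} \<times> {T - \<tau>2<..<T - \<tau>1} \<subseteq> interior (moving_region T0 \<delta> T)"
    by (intro interior_maximal open_box)
  ultimately show ?thesis using that \<tau>1 by blast
qed

lemma blowup_region_boxes:
  assumes "0 < \<gamma>" "blowup_region \<gamma> T W" "0 < M"
  obtains D \<tau>1 \<tau>2 where "0 < \<tau>1" "\<tau>1 < \<tau>2" "M * \<tau>2 powr \<gamma> \<le> D"
    "{1 - D<..<1} \<times> {- D<..<D} \<times> {T - \<tau>2<..<T - \<tau>1} \<subseteq> interior W"
  using assms(2) unfolding blowup_region_def
proof (elim disjE exE conjE)
  fix \<delta> assume W: "W = cyl_region \<delta> T" and "0 < \<delta>"
  show thesis
    using that unfolding W by (rule cyl_region_boxes[OF assms(1) \<open>0 < \<delta>\<close> assms(3)])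
next
  fix T0 \<delta> assume W: "W = moving_region T0 \<delta> T"
    and h: "T0 < T" "\<forall>t. T0 < t \<and> t < T \<longrightarrow> 0 < \<delta> t"
    "\<forall>s t. T0 < s \<and> s \<le> t \<and> t < T \<longrightarrow> \<delta> t \<le> \<delta> s" "(\<delta> \<longlongrightarrow> 0) (at_left T)"
    "Limsup (at_left T) (\<lambda>t. ereal ((T - t) powr (- \<gamma>) * \<delta> t)) = \<infinity>"
  show thesis
    using that unfolding W by (rule moving_region_boxes[OF assms(1,3) h])
qed

lemma blowup_region_scaled_points:
  assumes "0 < \<gamma>" "blowup_region \<gamma> T W" "R < 0"
  obtains \<tau>a \<tau>b where "0 < \<tau>a" "\<tau>a < \<tau>b"
    "(1 + R * \<tau>a powr \<gamma>, Z * \<tau>a powr \<gamma>, T - \<tau>a) \<in> interior W"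
    "(1 + R * \<tau>b powr \<gamma>, Z * \<tau>b powr \<gamma>, T - \<tau>b) \<in> interior W"
proof -
  define M where "M = \<bar>R\<bar> + \<bar>Z\<bar> + 1"
  have M: "0 < M" by (simp add: M_def add_pos_nonneg)
  obtain D \<tau>1 \<tau>2 where \<tau>: "0 < \<tau>1" "\<tau>1 < \<tau>2" "M * \<tau>2 powr \<gamma> \<le> D"
    and box: "{1 - D<..<1} \<times> {- D<..<D} \<times> {T - \<tau>2<..<T - \<tau>1} \<subseteq> interior W"
    using blowup_region_boxes[OF assms(1,2) M] by blast
  have mem: "(1 + R * \<tau> powr \<gamma>, Z * \<tau> powr \<gamma>, T - \<tau>) \<in> interior W" if "\<tau>1 < \<tau>" "\<tau> < \<tau>2" for \<tau>
  proof -
    have "\<tau> powr \<gamma> < \<tau>2 powr \<gamma>" using assms(1) \<tau>(1) that by (intro powr_less_mono2) auto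
    with M have "M * \<tau> powr \<gamma> < M * \<tau>2 powr \<gamma>" by simp
    then have "M * \<tau> powr \<gamma> < D" using \<tau>(3) by linarith
    moreover have "\<bar>R\<bar> * \<tau> powr \<gamma> \<le> M * \<tau> powr \<gamma>" "\<bar>Z\<bar> * \<tau> powr \<gamma> \<le> M * \<tau> powr \<gamma>"
      by (auto simp: M_def intro!: mult_right_mono)
    moreover have "R * \<tau> powr \<gamma> < 0" using assms(3) \<tau>(1) that by (simp add: mult_neg_pos)
    moreover have "\<bar>Z * \<tau> powr \<gamma>\<bar> = \<bar>Z\<bar> * \<tau> powr \<gamma>" by (simp add: abs_mult)
    ultimately have "1 + R * \<tau> powr \<gamma> \<in> {1 - D<..<1}" "Z * \<tau> powr \<gamma> \<in> {- D<..<D}"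
      using assms(3) by (auto simp: abs_less_iff)
    moreover have "T - \<tau> \<in> {T - \<tau>2<..<T - \<tau>1}" using that by simp
    ultimately show ?thesis using box by blast
  qed
  define \<tau>a \<tau>b where "\<tau>a = (2 * \<tau>1 + \<tau>2) / 3" and "\<tau>b = (\<tau>1 + 2 * \<tau>2) / 3"
  have ab: "\<tau>1 < \<tau>a" "\<tau>a < \<tau>b" "\<tau>b < \<tau>2" using \<tau>(2) by (simp_all add: \<tau>a_def \<tau>b_def)
  show thesis
  proof (rule that)
    show "0 < \<tau>a" using \<tau>(1) ab(1) by linarith
    show "(1 + R * \<tau>a powr \<gamma>, Z * \<tau>a powr \<gamma>, T - \<tau>a) \<in> interior W"
      "(1 + R * \<tau>b powr \<gamma>, Z * \<tau>b powr \<gamma>, T - \<tau>b) \<in> interior W"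
      using ab by (simp_all add: mem)
  qed (fact ab(2))
qed

section \<open>The profile equations\<close>

lemma pder_append: "pder (bs' @ bs) g = pder bs' (pder bs g)"
  by (induction bs') auto

lemma smooth2_on_pder:
  assumes "smooth2_on S g"
  shows "smooth2_on S (pder bs g)"
  unfolding smooth2_on_def
proof
  fix bs'
  show "continuous_on S (\<lambda>(R, Z). pder bs' (pder bs g) R Z) \<and>
    (\<forall>(R, Z)\<in>S. (\<lambda>x. pder bs' (pder bs g) x Z) differentiable (at R) \<and>
      (\<lambda>y. pder bs' (pder bs g) R y) differentiable (at Z))"
    using assms unfolding smooth2_on_def pder_append[symmetric] by blast
qed

lemma smooth2_onD:
  assumes "smooth2_on S g" "(R, Z) \<in> S"
  shows "(\<lambda>x. g x Z) differentiable (at R)" "(\<lambda>y. g R y) differentiable (at Z)"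
proof -
  have "\<forall>(R, Z)\<in>S. (\<lambda>x. pder [] g x Z) differentiable (at R) \<and> (\<lambda>y. pder [] g R y) differentiable (at Z)"
    using assms(1) unfolding smooth2_on_def by blast
  with assms(2) show "(\<lambda>x. g x Z) differentiable (at R)" "(\<lambda>y. g R y) differentiable (at Z)"
    by auto
qed

lemma smooth2_on_continuous_on:
  assumes "smooth2_on S g"
  shows "continuous_on S (\<lambda>(R, Z). g R Z)"
proof -
  have "continuous_on S (\<lambda>(R, Z). pder [] g R Z)"
    using assms unfolding smooth2_on_def by blast
  then show ?thesis by simp
qed

lemma half_plane_eq_closure: "half_plane = closure {(R, Z). R < 0}"
proof -
  have "{(R, Z). R < 0} = {..<0::real} \<times> (UNIV :: real set)" by auto
  then show ?thesis by (auto simp: half_plane_def closure_Times)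
qed

locale self_similar_solution =
  fixes \<gamma> T :: real
    and W :: "(real \<times> real \<times> real) set"
    and u1 \<omega>1 \<psi>1 :: "real \<Rightarrow> real \<Rightarrow> real \<Rightarrow> real"
    and U \<Omega> \<Psi> :: "real \<Rightarrow> real \<Rightarrow> real"
  assumes gamma_pos: "0 < \<gamma>"
    and region: "blowup_region \<gamma> T W"
    and Psi_cont: "continuous_on half_plane (\<lambda>(R, Z). \<Psi> R Z)"
    and U_smooth: "smooth2_on {(R, Z). R < 0} U"
    and Omega_smooth: "smooth2_on {(R, Z). R < 0} \<Omega>"
    and Psi_smooth: "smooth2_on {(R, Z). R < 0} \<Psi>"
    and u1_eq: "\<And>r z t. (r, z, t) \<in> W \<Longrightarrow> u1 r z t = selfsim \<gamma> T (-1 + \<gamma> / 2) U r z t"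
    and omega1_eq: "\<And>r z t. (r, z, t) \<in> W \<Longrightarrow> \<omega>1 r z t = selfsim \<gamma> T (-1) \<Omega> r z t"
    and psi1_eq: "\<And>r z t. (r, z, t) \<in> W \<Longrightarrow> \<psi>1 r z t = selfsim \<gamma> T (-1 + 2 * \<gamma>) \<Psi> r z t"
    and eq_omega:
      "\<And>r z t. (r, z, t) \<in> W \<Longrightarrow>
         Dt \<omega>1 r z t + (- r * Dz \<psi>1 r z t) * Dr \<omega>1 r z t
           + (2 * \<psi>1 r z t + r * Dr \<psi>1 r z t) * Dz \<omega>1 r z t
         = Dz (\<lambda>r z t. (u1 r z t)\<^sup>2) r z t"
    and eq_psi:
      "\<And>r z t. (r, z, t) \<in> W \<Longrightarrow>
         - (Dr (Dr \<psi>1) r z t + 3 / r * Dr \<psi>1 r z t + Dz (Dz \<psi>1) r z t) = \<omega>1 r z t"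
    and decay: "\<And>R. R \<le> 0 \<Longrightarrow> ((\<lambda>Z. \<bar>U R Z\<bar> + \<bar>\<Omega> R Z\<bar>) \<longlongrightarrow> 0) at_infinity"
begin

lemma profile_arg_neg:
  assumes "(r, z, t) \<in> W"
  shows "(r - 1) * (T - t) powr (- \<gamma>) < 0"
  using blowup_region_bounds[OF region assms] by (simp add: mult_neg_pos)

lemma eventually_interior_W:
  assumes "(r, z, t) \<in> interior W"
  shows "\<forall>\<^sub>F s in nhds r. (s, z, t) \<in> interior W"
    and "\<forall>\<^sub>F y in nhds z. (r, y, t) \<in> interior W"
    and "\<forall>\<^sub>F s in nhds t. (r, z, s) \<in> interior W"
  using assms by (auto intro!: eventually_nhds_continuous_in_open continuous_intros)

lemma Dr_eq_selfsim:
  assumes "(r, z, t) \<in> interior W" "\<And>R Z. R < 0 \<Longrightarrow> (\<lambda>x. P x Z) differentiable (at R)"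
    and "\<And>r z t. (r, z, t) \<in> interior W \<Longrightarrow> f r z t = selfsim \<gamma> T \<alpha> P r z t"
  shows "Dr f r z t = selfsim \<gamma> T (\<alpha> - \<gamma>) (pder [True] P) r z t"
proof (rule Dr_selfsim)
  show "(\<lambda>x. P x (z * (T - t) powr - \<gamma>)) differentiable (at ((r - 1) * (T - t) powr - \<gamma>))"
    using assms(1,2) profile_arg_neg interior_subset by blast
  show "\<forall>\<^sub>F s in nhds r. f s z t = selfsim \<gamma> T \<alpha> P s z t"
    using eventually_interior_W(1)[OF assms(1)] by eventually_elim (rule assms(3))
qed

lemma Dz_eq_selfsim:
  assumes "(r, z, t) \<in> interior W" "\<And>R Z. R < 0 \<Longrightarrow> (\<lambda>y. P R y) differentiable (at Z)"
    and "\<And>r z t. (r, z, t) \<in> interior W \<Longrightarrow> f r z t = selfsim \<gamma> T \<alpha> P r z t"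
  shows "Dz f r z t = selfsim \<gamma> T (\<alpha> - \<gamma>) (pder [False] P) r z t"
proof (rule Dz_selfsim)
  show "(\<lambda>y. P ((r - 1) * (T - t) powr - \<gamma>) y) differentiable (at (z * (T - t) powr - \<gamma>))"
    using assms(1,2) profile_arg_neg interior_subset by blast
  show "\<forall>\<^sub>F y in nhds z. f r y t = selfsim \<gamma> T \<alpha> P r y t"
    using eventually_interior_W(2)[OF assms(1)] by eventually_elim (rule assms(3))
qed

lemma psi1_derivs:
  assumes "(r, z, t) \<in> interior W"
  shows "Dr \<psi>1 r z t = selfsim \<gamma> T (-1 + \<gamma>) (pder [True] \<Psi>) r z t"
    and "Dr (Dr \<psi>1) r z t = selfsim \<gamma> T (-1) (pder [True, True] \<Psi>) r z t"
    and "Dz (Dz \<psi>1) r z t = selfsim \<gamma> T (-1) (pder [False, False] \<Psi>) r z t"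
proof -
  have \<psi>1: "\<psi>1 r z t = selfsim \<gamma> T (-1 + 2 * \<gamma>) \<Psi> r z t" if "(r, z, t) \<in> interior W" for r z t
    using psi1_eq that interior_subset by blast
  have dR: "(\<lambda>x. pder bs \<Psi> x Z) differentiable (at R)"
    and dZ: "(\<lambda>y. pder bs \<Psi> R y) differentiable (at Z)" if "R < 0" for bs R Z
    using smooth2_onD[OF smooth2_on_pder[OF Psi_smooth]] that by auto
  have Dr1: "Dr \<psi>1 r z t = selfsim \<gamma> T (-1 + \<gamma>) (pder [True] \<Psi>) r z t"
    if "(r, z, t) \<in> interior W" for r z t
    using Dr_eq_selfsim[OF that dR[where bs = "[]", simplified] \<psi>1] by simp
  have Dz1: "Dz \<psi>1 r z t = selfsim \<gamma> T (-1 + \<gamma>) (pder [False] \<Psi>) r z t"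
    if "(r, z, t) \<in> interior W" for r z t
    using Dz_eq_selfsim[OF that dZ[where bs = "[]", simplified] \<psi>1] by simp
  show "Dr \<psi>1 r z t = selfsim \<gamma> T (-1 + \<gamma>) (pder [True] \<Psi>) r z t" using Dr1[OF assms] .
  show "Dr (Dr \<psi>1) r z t = selfsim \<gamma> T (-1) (pder [True, True] \<Psi>) r z t"
    using Dr_eq_selfsim[OF assms dR Dr1] by simp
  show "Dz (Dz \<psi>1) r z t = selfsim \<gamma> T (-1) (pder [False, False] \<Psi>) r z t"
    using Dz_eq_selfsim[OF assms dZ Dz1] by simp
qed

lemma Psi_profile_equation:
  assumes "0 < \<tau>" and p: "(1 + R * \<tau> powr \<gamma>, Z * \<tau> powr \<gamma>, T - \<tau>) \<in> interior W"
  shows "pder [True, True] \<Psi> R Z + pder [False, False] \<Psi> R Z + \<Omega> R Z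
    + 3 * \<tau> powr \<gamma> / (1 + R * \<tau> powr \<gamma>) * pder [True] \<Psi> R Z = 0"
proof -
  note at_p = selfsim_at_scaled_point[OF \<open>0 < \<tau>\<close>]
  have "- (\<tau> powr (-1) * pder [True, True] \<Psi> R Z
      + 3 / (1 + R * \<tau> powr \<gamma>) * (\<tau> powr (-1 + \<gamma>) * pder [True] \<Psi> R Z)
      + \<tau> powr (-1) * pder [False, False] \<Psi> R Z) = \<tau> powr (-1) * \<Omega> R Z"
    using eq_psi[OF interior_subset[THEN subsetD, OF p]] omega1_eq[OF interior_subset[THEN subsetD, OF p]]
    by (simp only: psi1_derivs[OF p] at_p)
  moreover have "\<tau> powr (-1 + \<gamma>) = \<tau> powr (-1) * \<tau> powr \<gamma>" by (rule powr_add)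
  ultimately have "\<tau> powr (-1) * (pder [True, True] \<Psi> R Z + pder [False, False] \<Psi> R Z + \<Omega> R Z
    + 3 * \<tau> powr \<gamma> / (1 + R * \<tau> powr \<gamma>) * pder [True] \<Psi> R Z) = 0"
    by (simp add: algebra_simps)
  with \<open>0 < \<tau>\<close> show ?thesis by simp
qed

lemma Psi_R_eq_0_and_Laplacian:
  assumes "R < 0"
  shows "pder [True] \<Psi> R Z = 0"
    and "pder [True, True] \<Psi> R Z + pder [False, False] \<Psi> R Z + \<Omega> R Z = 0"
proof -
  obtain \<tau>a \<tau>b where \<tau>: "0 < \<tau>a" "\<tau>a < \<tau>b"
    and pa: "(1 + R * \<tau>a powr \<gamma>, Z * \<tau>a powr \<gamma>, T - \<tau>a) \<in> interior W"
    and pb: "(1 + R * \<tau>b powr \<gamma>, Z * \<tau>b powr \<gamma>, T - \<tau>b) \<in> interior W"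
    using blowup_region_scaled_points[OF gamma_pos region assms] by blast
  define x where "x \<tau> = 3 * \<tau> powr \<gamma> / (1 + R * \<tau> powr \<gamma>)" for \<tau>
  have "0 < 1 + R * \<tau>a powr \<gamma>" "0 < 1 + R * \<tau>b powr \<gamma>"
    using blowup_region_bounds(1)[OF region] pa pb interior_subset by blast+
  moreover have "\<tau>a powr \<gamma> < \<tau>b powr \<gamma>" using \<tau> gamma_pos by (intro powr_less_mono2) auto
  ultimately have neq: "x \<tau>a \<noteq> x \<tau>b" by (auto simp: x_def field_simps)
  have eq: "pder [True, True] \<Psi> R Z + pder [False, False] \<Psi> R Z + \<Omega> R Z
      + x \<tau> * pder [True] \<Psi> R Z = 0" if "0 < \<tau>"
      "(1 + R * \<tau> powr \<gamma>, Z * \<tau> powr \<gamma>, T - \<tau>) \<in> interior W" for \<tau>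
    unfolding x_def using Psi_profile_equation[OF that] by simp
  have "0 < \<tau>b" using \<tau> by linarith
  from affine_eq_0_at_two_points[OF neq eq[OF \<tau>(1) pa] eq[OF this pb]]
  show "pder [True] \<Psi> R Z = 0"
    and "pder [True, True] \<Psi> R Z + pder [False, False] \<Psi> R Z + \<Omega> R Z = 0" .
qed

text \<open>Once the profiles are known not to depend on \<open>R < 0\<close>, they are represented by their
  traces on \<open>R = -1\<close>.\<close>

lemma Psi_eq_Psi_trace:
  assumes "R < 0"
  shows "\<Psi> R Z = \<Psi> (-1) Z"
proof (rule deriv_eq_0_imp_eq[where S = "{..<0}" and f = "\<lambda>x. \<Psi> x Z"])
  show "(\<lambda>x. \<Psi> x Z) differentiable (at s)" if "s \<in> {..<0}" for s
    using smooth2_onD(1)[OF Psi_smooth] that by auto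
  show "deriv (\<lambda>x. \<Psi> x Z) s = 0" if "s \<in> {..<0}" for s
    using Psi_R_eq_0_and_Laplacian(1)[of s Z] that by simp
qed (use assms in auto)

lemma Omega_eq_neg_deriv2_Psi_trace:
  assumes "R < 0"
  shows "\<Omega> R Z = - deriv (deriv (\<Psi> (-1))) Z"
proof -
  have "\<forall>\<^sub>F x in nhds R. x \<in> {..<0}"
    using assms by (intro eventually_nhds_in_open) auto
  then have "\<forall>\<^sub>F x in nhds R. pder [True] \<Psi> x Z = 0"
    by eventually_elim (rule Psi_R_eq_0_and_Laplacian(1), simp)
  from eventually_nhds_x_imp_x[OF eventually_nhds_deriv_eq_0[OF this]]
  have "pder [True, True] \<Psi> R Z = 0" by simp
  moreover have "\<Psi> R = \<Psi> (-1)" using Psi_eq_Psi_trace[OF assms] by auto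
  then have "pder [False, False] \<Psi> R Z = deriv (deriv (\<Psi> (-1))) Z" by simp
  ultimately show ?thesis using Psi_R_eq_0_and_Laplacian(2)[OF assms, of Z] by simp
qed

lemma Omega_eq_Omega_trace: "R < 0 \<Longrightarrow> \<Omega> R Z = \<Omega> (-1) Z"
  using Omega_eq_neg_deriv2_Psi_trace[of R] Omega_eq_neg_deriv2_Psi_trace[of "-1"] by simp

lemma profiles_R_independent:
  assumes "(r, z, t) \<in> W"
  shows "\<psi>1 r z t = selfsim \<gamma> T (-1 + 2 * \<gamma>) (\<lambda>_. \<Psi> (-1)) r z t"
    and "\<omega>1 r z t = selfsim \<gamma> T (-1) (\<lambda>_. \<Omega> (-1)) r z t"
  using psi1_eq[OF assms] omega1_eq[OF assms]
    Psi_eq_Psi_trace[OF profile_arg_neg[OF assms]] Omega_eq_Omega_trace[OF profile_arg_neg[OF assms]]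
  by (simp_all add: selfsim_def)

lemma Omega_trace_differentiable: "\<Omega> (-1) differentiable (at Y)"
  using smooth2_onD(2)[OF Omega_smooth, of "-1" Y] by simp

lemma vorticity_equation_terms:
  assumes p: "(r, z, t) \<in> interior W"
  shows "Dt \<omega>1 r z t = selfsim \<gamma> T (-2) (\<lambda>_ Z. \<gamma> * Z * deriv (\<Omega> (-1)) Z + \<Omega> (-1) Z) r z t"
    and "Dr \<omega>1 r z t = 0" and "Dr \<psi>1 r z t = 0"
    and "Dz \<omega>1 r z t = selfsim \<gamma> T (-1 - \<gamma>) (\<lambda>_. deriv (\<Omega> (-1))) r z t"
    and "Dz (\<lambda>r z t. (u1 r z t)\<^sup>2) r z t = selfsim \<gamma> T (-2) (\<lambda>R. deriv (\<lambda>Y. (U R Y)\<^sup>2)) r z t"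
proof -
  have \<psi>1: "\<psi>1 r z t = selfsim \<gamma> T (-1 + 2 * \<gamma>) (\<lambda>_. \<Psi> (-1)) r z t"
    and \<omega>1: "\<omega>1 r z t = selfsim \<gamma> T (-1) (\<lambda>_. \<Omega> (-1)) r z t"
    if "(r, z, t) \<in> interior W" for r z t
    using profiles_R_independent that interior_subset by blast+
  have u1_sq: "(u1 r z t)\<^sup>2 = selfsim \<gamma> T (-2 + \<gamma>) (\<lambda>R Z. (U R Z)\<^sup>2) r z t"
    if "(r, z, t) \<in> interior W" for r z t
  proof -
    have "((T - t) powr (-1 + \<gamma> / 2))\<^sup>2 = (T - t) powr (-2 + \<gamma>)"
      by (simp add: power2_eq_square powr_add[symmetric])
    moreover have "(r, z, t) \<in> W" using that interior_subset by blast
    ultimately show ?thesis by (simp add: u1_eq selfsim_def power_mult_distrib)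
  qed
  have "t < T" using blowup_region_bounds(3)[OF region] p interior_subset by blast
  have "\<forall>\<^sub>F s in nhds t. \<omega>1 r z s = selfsim \<gamma> T (-1) (\<lambda>_. \<Omega> (-1)) r z s"
    using eventually_interior_W(3)[OF p] by eventually_elim (rule \<omega>1)
  from Dt_selfsim_R_independent[where f = \<omega>1, OF Omega_trace_differentiable \<open>t < T\<close> this]
  show "Dt \<omega>1 r z t = selfsim \<gamma> T (-2) (\<lambda>_ Z. \<gamma> * Z * deriv (\<Omega> (-1)) Z + \<Omega> (-1) Z) r z t"
    by simp
  show "Dr \<omega>1 r z t = 0"
    using Dr_eq_selfsim[OF p _ \<omega>1] by (simp add: selfsim_def)
  show "Dr \<psi>1 r z t = 0"
    using Dr_eq_selfsim[OF p _ \<psi>1] by (simp add: selfsim_def)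
  show "Dz \<omega>1 r z t = selfsim \<gamma> T (-1 - \<gamma>) (\<lambda>_. deriv (\<Omega> (-1))) r z t"
    using Dz_eq_selfsim[OF p _ \<omega>1] Omega_trace_differentiable by simp
  show "Dz (\<lambda>r z t. (u1 r z t)\<^sup>2) r z t = selfsim \<gamma> T (-2) (\<lambda>R. deriv (\<lambda>Y. (U R Y)\<^sup>2)) r z t"
    using Dz_eq_selfsim[OF p _ u1_sq] smooth2_onD(2)[OF U_smooth] by simp
qed

lemma Omega_profile_equation:
  assumes "0 < \<tau>" and p: "(1 + R * \<tau> powr \<gamma>, Z * \<tau> powr \<gamma>, T - \<tau>) \<in> interior W"
  shows "\<Omega> (-1) Z + \<gamma> * Z * deriv (\<Omega> (-1)) Z - deriv (\<lambda>Y. (U R Y)\<^sup>2) Z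
    + \<tau> powr \<gamma> * (2 * \<Psi> (-1) Z * deriv (\<Omega> (-1)) Z) = 0"
proof -
  note at_p = selfsim_at_scaled_point[OF \<open>0 < \<tau>\<close>]
  have "\<tau> powr (-2) * (\<gamma> * Z * deriv (\<Omega> (-1)) Z + \<Omega> (-1) Z)
      + 2 * (\<tau> powr (-1 + 2 * \<gamma>) * \<Psi> (-1) Z) * (\<tau> powr (-1 - \<gamma>) * deriv (\<Omega> (-1)) Z)
      = \<tau> powr (-2) * deriv (\<lambda>Y. (U R Y)\<^sup>2) Z"
    using eq_omega[OF interior_subset[THEN subsetD, OF p]]
      profiles_R_independent(1)[OF interior_subset[THEN subsetD, OF p]]
    by (simp add: vorticity_equation_terms[OF p] at_p)
  moreover have "\<tau> powr (-1 + 2 * \<gamma>) * \<tau> powr (-1 - \<gamma>) = \<tau> powr (-2) * \<tau> powr \<gamma>"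
    by (simp add: powr_add[symmetric])
  ultimately have "\<tau> powr (-2) * (\<Omega> (-1) Z + \<gamma> * Z * deriv (\<Omega> (-1)) Z - deriv (\<lambda>Y. (U R Y)\<^sup>2) Z
    + \<tau> powr \<gamma> * (2 * \<Psi> (-1) Z * deriv (\<Omega> (-1)) Z)) = 0"
    by (simp add: algebra_simps)
  with \<open>0 < \<tau>\<close> show ?thesis by simp
qed

lemma Omega_trace_equations:
  assumes "R < 0"
  shows "\<Psi> (-1) Z * deriv (\<Omega> (-1)) Z = 0"
    and "deriv (\<lambda>Y. (U R Y)\<^sup>2) Z = \<Omega> (-1) Z + \<gamma> * Z * deriv (\<Omega> (-1)) Z"
proof -
  obtain \<tau>a \<tau>b where \<tau>: "0 < \<tau>a" "\<tau>a < \<tau>b"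
    and pa: "(1 + R * \<tau>a powr \<gamma>, Z * \<tau>a powr \<gamma>, T - \<tau>a) \<in> interior W"
    and pb: "(1 + R * \<tau>b powr \<gamma>, Z * \<tau>b powr \<gamma>, T - \<tau>b) \<in> interior W"
    using blowup_region_scaled_points[OF gamma_pos region assms] by blast
  have "\<tau>a powr \<gamma> < \<tau>b powr \<gamma>" using \<tau> gamma_pos by (intro powr_less_mono2) auto
  then have neq: "\<tau>a powr \<gamma> \<noteq> \<tau>b powr \<gamma>" by simp
  have "0 < \<tau>b" using \<tau> by linarith
  from affine_eq_0_at_two_points
    [OF neq Omega_profile_equation[OF \<tau>(1) pa] Omega_profile_equation[OF this pb]]
  show "\<Psi> (-1) Z * deriv (\<Omega> (-1)) Z = 0"
    and "deriv (\<lambda>Y. (U R Y)\<^sup>2) Z = \<Omega> (-1) Z + \<gamma> * Z * deriv (\<Omega> (-1)) Z"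
    by simp_all
qed

lemma Omega_trace_eq_0: "\<Omega> (-1) Z = 0"
proof -
  have "continuous_on UNIV (\<lambda>Y. (\<lambda>(R, Z). pder [False] \<Omega> R Z) (-1, Y))"
    using smooth2_on_continuous_on[OF smooth2_on_pder[OF Omega_smooth]]
    by (rule continuous_on_compose2) (auto intro!: continuous_intros)
  then have "isCont (deriv (\<Omega> (-1))) Y" for Y
    by (simp add: continuous_on_eq_continuous_at)
  then have "deriv (\<Omega> (-1)) Y = 0" for Y
    using Omega_trace_equations(1)[of "-1"] Omega_eq_neg_deriv2_Psi_trace[of "-1"]
    by (intro deriv_eq_0_if_mult_deriv_eq_0[where g = "\<Psi> (-1)"]) auto
  then have "\<Omega> (-1) X = \<Omega> (-1) Y" for X Y
    using Omega_trace_differentiable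
    by (intro deriv_eq_0_imp_eq[where S = UNIV and f = "\<Omega> (-1)"]) auto
  moreover have "(\<Omega> (-1) \<longlongrightarrow> 0) at_infinity"
    by (rule Lim_null_comparison[OF _ decay[of "-1"]]) auto
  ultimately show ?thesis by (rule constant_tendsto_0_at_infinity)
qed

lemma Psi_trace_affine:
  obtains a b where "\<And>Z. \<Psi> (-1) Z = a * Z + b"
proof -
  have "\<Psi> (-1) differentiable (at Z)" for Z
    using smooth2_onD(2)[OF Psi_smooth, of "-1" Z] by simp
  moreover have "deriv (\<Psi> (-1)) differentiable (at Z)" for Z
    using smooth2_onD(2)[OF smooth2_on_pder[OF Psi_smooth], of "-1" Z "[False]"] by simp
  moreover have "deriv (deriv (\<Psi> (-1))) Z = 0" for Z
    using Omega_eq_neg_deriv2_Psi_trace[of "-1" Z] Omega_trace_eq_0[of Z] by simp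
  ultimately show thesis using that by (rule affine_if_deriv2_eq_0)
qed

lemma U_eq_0:
  assumes "R < 0"
  shows "U R Z = 0"
proof -
  have "\<Omega> (-1) = (\<lambda>_. 0)" using Omega_trace_eq_0 by auto
  then have "deriv (\<lambda>Y. (U R Y)\<^sup>2) Y = 0" for Y
    using Omega_trace_equations(2)[OF assms] by simp
  then have "(U R X)\<^sup>2 = (U R Y)\<^sup>2" for X Y
    using smooth2_onD(2)[OF U_smooth] assms
    by (intro deriv_eq_0_imp_eq[where S = UNIV and f = "\<lambda>Y. (U R Y)\<^sup>2"]) auto
  moreover have "(U R \<longlongrightarrow> 0) at_infinity"
    using assms by (intro Lim_null_comparison[OF _ decay[of R]]) auto
  then have "((\<lambda>Y. (U R Y)\<^sup>2) \<longlongrightarrow> 0) at_infinity"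
    using tendsto_power[of "U R" 0 at_infinity 2] by simp
  ultimately have "(U R Z)\<^sup>2 = 0" by (rule constant_tendsto_0_at_infinity)
  then show ?thesis by simp
qed

lemma Psi_affine_on_half_plane:
  assumes ab: "\<And>Z. \<Psi> (-1) Z = a * Z + b" and "(R, Z) \<in> half_plane"
  shows "\<Psi> R Z = a * Z + b"
proof -
  have "continuous_on half_plane (\<lambda>p. (\<lambda>(R, Z). \<Psi> R Z) p - (a * snd p + b))"
    using Psi_cont by (intro continuous_intros)
  from this[unfolded half_plane_eq_closure]
  have cont: "continuous_on (closure {(R, Z). R < 0}) (\<lambda>(R, Z). \<Psi> R Z - (a * Z + b))"
    by (simp add: case_prod_unfold)
  have "(\<lambda>(R, Z). \<Psi> R Z - (a * Z + b)) (R, Z) = 0"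
  proof (rule continuous_constant_on_closure[OF cont])
    show "(\<lambda>(R, Z). \<Psi> R Z - (a * Z + b)) q = 0" if "q \<in> {(R, Z). R < 0}" for q
      using that Psi_eq_Psi_trace[of "fst q" "snd q"] ab[of "snd q"] by (auto simp: case_prod_unfold)
    show "(R, Z) \<in> closure {(R, Z). R < 0}" using assms(2) half_plane_eq_closure by simp
  qed
  then show ?thesis by simp
qed

theorem self_similar_solution_trivial:
  obtains a b where
    "\<forall>(r, z, t)\<in>W. u1 r z t = 0 \<and> \<omega>1 r z t = 0 \<and>
       \<psi>1 r z t = a * (T - t) powr (-1 + \<gamma>) * z + b * (T - t) powr (-1 + 2 * \<gamma>)"
    "\<forall>(R, Z)\<in>half_plane. \<Psi> R Z = a * Z + b"
proof -
  obtain a b where ab: "\<And>Z. \<Psi> (-1) Z = a * Z + b" using Psi_trace_affine by blast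
  have "u1 r z t = 0 \<and> \<omega>1 r z t = 0 \<and>
      \<psi>1 r z t = a * (T - t) powr (-1 + \<gamma>) * z + b * (T - t) powr (-1 + 2 * \<gamma>)"
    if "(r, z, t) \<in> W" for r z t
  proof -
    have "(T - t) powr (-1 + 2 * \<gamma>) * (T - t) powr (- \<gamma>) = (T - t) powr (-1 + \<gamma>)"
      by (simp add: powr_add[symmetric])
    then show ?thesis
      using u1_eq[OF that] profiles_R_independent[OF that] U_eq_0[OF profile_arg_neg[OF that]]
      by (simp add: selfsim_def Omega_trace_eq_0 ab algebra_simps)
  qed
  with Psi_affine_on_half_plane[OF ab] show thesis by (intro that) auto
qed

end

theorem theorem1:
  fixes \<gamma> T :: real
    and W :: "(real \<times> real \<times> real) set"
    and u1 \<omega>1 \<psi>1 :: "real \<Rightarrow> real \<Rightarrow> real \<Rightarrow> real"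
    and U \<Omega> \<Psi> :: "real \<Rightarrow> real \<Rightarrow> real"
  assumes gamma_pos: "0 < \<gamma>"
    and T_pos: "0 < T"
    and region:
      "(\<exists>\<delta>. 0 < \<delta> \<and> \<delta> < 1 \<and> W = cyl_region \<delta> T) \<or>
       (\<exists>T0 \<delta>. T0 < T \<and> (\<forall>t. T0 < t \<and> t < T \<longrightarrow> 0 < \<delta> t) \<and>
          (\<forall>s t. T0 < s \<and> s \<le> t \<and> t < T \<longrightarrow> \<delta> t \<le> \<delta> s) \<and>
          (\<delta> \<longlongrightarrow> 0) (at_left T) \<and>
          Limsup (at_left T) (\<lambda>t. ereal ((T - t) powr (- \<gamma>) * \<delta> t)) = \<infinity> \<and>
          W = moving_region T0 \<delta> T)"
    and U_cont: "continuous_on half_plane (\<lambda>(R, Z). U R Z)"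
    and Omega_cont: "continuous_on half_plane (\<lambda>(R, Z). \<Omega> R Z)"
    and Psi_cont: "continuous_on half_plane (\<lambda>(R, Z). \<Psi> R Z)"
    and U_smooth: "smooth2_on {(R, Z). R < 0} U"
    and Omega_smooth: "smooth2_on {(R, Z). R < 0} \<Omega>"
    and Psi_smooth: "smooth2_on {(R, Z). R < 0} \<Psi>"
    and self_similar:
      "\<And>r z t. (r, z, t) \<in> W \<Longrightarrow>
         u1 r z t = (T - t) powr (-1 + \<gamma> / 2) * U ((r - 1) * (T - t) powr (- \<gamma>)) (z * (T - t) powr (- \<gamma>)) \<and>
         \<omega>1 r z t = (T - t) powr (-1) * \<Omega> ((r - 1) * (T - t) powr (- \<gamma>)) (z * (T - t) powr (- \<gamma>)) \<and>
         \<psi>1 r z t = (T - t) powr (-1 + 2 * \<gamma>) * \<Psi> ((r - 1) * (T - t) powr (- \<gamma>)) (z * (T - t) powr (- \<gamma>))"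
    and eq_u:
      "\<And>r z t. (r, z, t) \<in> W \<Longrightarrow>
         Dt u1 r z t + (- r * Dz \<psi>1 r z t) * Dr u1 r z t
           + (2 * \<psi>1 r z t + r * Dr \<psi>1 r z t) * Dz u1 r z t
         = 2 * u1 r z t * Dz \<psi>1 r z t"
    and eq_omega:
      "\<And>r z t. (r, z, t) \<in> W \<Longrightarrow>
         Dt \<omega>1 r z t + (- r * Dz \<psi>1 r z t) * Dr \<omega>1 r z t
           + (2 * \<psi>1 r z t + r * Dr \<psi>1 r z t) * Dz \<omega>1 r z t
         = Dz (\<lambda>r z t. (u1 r z t)\<^sup>2) r z t"
    and eq_psi:
      "\<And>r z t. (r, z, t) \<in> W \<Longrightarrow>
         - (Dr (Dr \<psi>1) r z t + 3 / r * Dr \<psi>1 r z t + Dz (Dz \<psi>1) r z t) = \<omega>1 r z t"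
    and decay:
      "\<And>R. R \<le> 0 \<Longrightarrow> ((\<lambda>Z. \<bar>U R Z\<bar> + \<bar>\<Omega> R Z\<bar>) \<longlongrightarrow> 0) at_infinity"
  shows "(\<forall>(r, z, t) \<in> W. u1 r z t = 0 \<and> \<omega>1 r z t = 0) \<and>
         (\<exists>a b. (\<forall>(r, z, t) \<in> W.
                    \<psi>1 r z t = a * (T - t) powr (-1 + \<gamma>) * z + b * (T - t) powr (-1 + 2 * \<gamma>)) \<and>
                (\<forall>(R, Z) \<in> half_plane. \<Psi> R Z = a * Z + b))"
proof -
  interpret self_similar_solution \<gamma> T W u1 \<omega>1 \<psi>1 U \<Omega> \<Psi>
  proof
    show "blowup_region \<gamma> T W" using region unfolding blowup_region_def .
    show "u1 r z t = selfsim \<gamma> T (-1 + \<gamma> / 2) U r z t"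
      and "\<omega>1 r z t = selfsim \<gamma> T (-1) \<Omega> r z t"
      and "\<psi>1 r z t = selfsim \<gamma> T (-1 + 2 * \<gamma>) \<Psi> r z t" if "(r, z, t) \<in> W" for r z t
      using self_similar[OF that] by (simp_all add: selfsim_def)
  qed (fact gamma_pos Psi_cont U_smooth Omega_smooth Psi_smooth eq_omega eq_psi decay)+
  obtain a b where
    "\<forall>(r, z, t)\<in>W. u1 r z t = 0 \<and> \<omega>1 r z t = 0 \<and>
       \<psi>1 r z t = a * (T - t) powr (-1 + \<gamma>) * z + b * (T - t) powr (-1 + 2 * \<gamma>)"
    "\<forall>(R, Z)\<in>half_plane. \<Psi> R Z = a * Z + b"
    by (rule self_similar_solution_trivial)
  then show ?thesis by blast
qed

end
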